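(* Let $G$ be a 3-connected cubic graph and $S$ a finite subset of $V(G)$. Then there is a finite subset $T$ of $V(G)$ such that $S\cup N_G(S)\subseteq T$ and for every component $H$ of $G-T$, the set $N_G(H)$ is 3-connected in $G-S$.
   Context: For $X\subseteq V(G)$, $N_G(X)=\bigcup_{v\in X}N_G(v)\setminus X$; for a subgraph $H$, $N_G(H)=N_G(V(H))$. A vertex set $X$ is 3-connected in a graph $G'$ if every two vertices of $X$ are joined by 3 internally disjoint paths of $G'$. *)

theory Defs
  imports Main
begin

definition graph :: "'a set \<Rightarrow> ('a \<Rightarrow> 'a \<Rightarrow> bool) \<Rightarrow> bool" where
  "graph V E \<longleftrightarrow> (\<forall>x y. E x y \<longrightarrow> x \<in> V \<and> y \<in> V \<and> x \<noteq> y \<and> E y x)"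

definition nbrs :: "('a \<Rightarrow> 'a \<Rightarrow> bool) \<Rightarrow> 'a \<Rightarrow> 'a set" where
  "nbrs E v = {u. E v u}"

definition cubic :: "'a set \<Rightarrow> ('a \<Rightarrow> 'a \<Rightarrow> bool) \<Rightarrow> bool" where
  "cubic V E \<longleftrightarrow> (\<forall>v\<in>V. finite (nbrs E v) \<and> card (nbrs E v) = 3)"

definition nbhd :: "('a \<Rightarrow> 'a \<Rightarrow> bool) \<Rightarrow> 'a set \<Rightarrow> 'a set" where
  "nbhd E X = (\<Union>v\<in>X. nbrs E v) - X"

definition is_path :: "'a set \<Rightarrow> ('a \<Rightarrow> 'a \<Rightarrow> bool) \<Rightarrow> 'a list \<Rightarrow> 'a \<Rightarrow> 'a \<Rightarrow> bool" where
  "is_path W E p x y \<longleftrightarrow> p \<noteq> [] \<and> hd p = x \<and> last p = y \<and> distinct p \<and> set p \<subseteq> W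
     \<and> (\<forall>i. Suc i < length p \<longrightarrow> E (p ! i) (p ! Suc i))"

definition interior :: "'a list \<Rightarrow> 'a set" where
  "interior p = set (butlast (tl p))"

definition connected_in :: "'a set \<Rightarrow> ('a \<Rightarrow> 'a \<Rightarrow> bool) \<Rightarrow> bool" where
  "connected_in W E \<longleftrightarrow> (\<forall>x\<in>W. \<forall>y\<in>W. \<exists>p. is_path W E p x y)"

definition three_connected :: "'a set \<Rightarrow> ('a \<Rightarrow> 'a \<Rightarrow> bool) \<Rightarrow> bool" where
  "three_connected V E \<longleftrightarrow> (infinite V \<or> card V > 3) \<and>
     (\<forall>X. X \<subseteq> V \<and> finite X \<and> card X < 3 \<longrightarrow> connected_in (V - X) E)"

definition component_of :: "'a set \<Rightarrow> ('a \<Rightarrow> 'a \<Rightarrow> bool) \<Rightarrow> 'a set \<Rightarrow> bool" where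
  "component_of W E C \<longleftrightarrow> (\<exists>x\<in>W. C = {y. \<exists>p. is_path W E p x y})"

definition set_three_connected_in :: "'a set \<Rightarrow> 'a set \<Rightarrow> ('a \<Rightarrow> 'a \<Rightarrow> bool) \<Rightarrow> bool" where
  "set_three_connected_in X W E \<longleftrightarrow> (\<forall>x\<in>X. \<forall>y\<in>X. x \<noteq> y \<longrightarrow>
     (\<exists>p1 p2 p3. is_path W E p1 x y \<and> is_path W E p2 x y \<and> is_path W E p3 x y
        \<and> p1 \<noteq> p2 \<and> p1 \<noteq> p3 \<and> p2 \<noteq> p3
        \<and> interior p1 \<inter> interior p2 = {} \<and> interior p1 \<inter> interior p3 = {}
        \<and> interior p2 \<inter> interior p3 = {}))"

end

(*
  T consists of S, N(S) and, for any two vertices u, v of N(S), finitely many vertices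
  through which every u-v path of G - S avoiding some given set of at most three vertices
  and edges can be rerouted.  Such a finite set exists by compactness: for paths with finite
  supports and obstacle sets of bounded size, finitely many paths suffice as witnesses
  (induction on the size bound).

  Let x, y be neighbours of a component H of G - T, let Z be a set of vertices with
  |Z| + [xy is an edge] <= 2, and delete the edge xy.  As G is cubic and 3-connected, x and y
  stay joined in G - Z.  If every such connection met S, it would run x ... u and v ... y in
  G - S - Z with u, v in N(S); as x and y are also joined through H, u and v are joined in
  G - S - (Z - H) without the edge xy, and rerouting inside T, which misses H, joins them in
  G - S - Z.  Hence x and y are joined in G - S - Z, and Menger's theorem yields three
  internally disjoint x-y paths in G - S.  Menger's theorem is proved for finite graphs by
  induction on the number of edges (Diestel, Graph Theory, Theorem 3.3.1) and carried over
  to infinite graphs by the same compactness argument.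
*)
theory Submission
  imports Defs "HOL-Library.Disjoint_Sets"
begin

section \<open>Paths as vertex lists\<close>

lemma set_butlast_last: "xs \<noteq> [] \<Longrightarrow> set xs = insert (last xs) (set (butlast xs))"
  by (induction xs) auto

lemma hd_butlast: "butlast xs \<noteq> [] \<Longrightarrow> hd (butlast xs) = hd xs"
  by (induction xs) auto

definition path_in :: "'a set \<Rightarrow> ('a \<Rightarrow> 'a \<Rightarrow> bool) \<Rightarrow> 'a list \<Rightarrow> bool" where
  "path_in W E p \<longleftrightarrow> p \<noteq> [] \<and> distinct p \<and> set p \<subseteq> W \<and> successively E p"

lemma is_path_iff_path_in: "is_path W E p a b \<longleftrightarrow> path_in W E p \<and> hd p = a \<and> last p = b"
  by (auto simp: is_path_def path_in_def successively_conv_nth)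

lemma path_in_appendD1: "path_in W E (xs @ ys) \<Longrightarrow> xs \<noteq> [] \<Longrightarrow> path_in W E xs"
  by (auto simp: path_in_def successively_append_iff)

lemma path_in_appendD2: "path_in W E (xs @ ys) \<Longrightarrow> ys \<noteq> [] \<Longrightarrow> path_in W E ys"
  by (auto simp: path_in_def successively_append_iff)

lemma path_in_butlast: "path_in W E p \<Longrightarrow> butlast p \<noteq> [] \<Longrightarrow> path_in W E (butlast p)"
  by (metis append_butlast_last_id path_in_appendD1 path_in_def)

lemma path_in_append:
  "path_in W E xs \<Longrightarrow> path_in W E ys \<Longrightarrow> set xs \<inter> set ys = {} \<Longrightarrow> E (last xs) (hd ys)
    \<Longrightarrow> path_in W E (xs @ ys)"
  by (auto simp: path_in_def successively_append_iff)

lemma path_in_rev: "symp E \<Longrightarrow> path_in W E p \<Longrightarrow> path_in W E (rev p)"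
  unfolding path_in_def symp_def by (auto elim!: successively_mono)

lemma path_in_restrict: "path_in W E p \<Longrightarrow> set p \<inter> S = {} \<Longrightarrow> path_in (W - S) E p"
  by (auto simp: path_in_def)

lemma path_in_prefix_to:
  assumes "path_in W E p" "w \<in> set p"
  obtains q where "path_in W E q" "hd q = hd p" "last q = w" "set q \<subseteq> set p"
proof -
  obtain xs ys where p: "p = xs @ w # ys" using assms(2) by (meson split_list)
  then have "path_in W E (xs @ [w])" using assms(1) path_in_appendD1[of W E "xs @ [w]" ys] by simp
  with p show thesis by (intro that) (auto simp: hd_append)
qed

lemma path_in_first_hit:
  assumes "path_in W E p" "set p \<inter> X \<noteq> {}"
  obtains q where "path_in W E q" "hd q = hd p" "last q \<in> X" "set (butlast q) \<inter> X = {}"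
    "set q \<subseteq> set p"
proof -
  obtain ys c zs where p: "p = ys @ c # zs" "c \<in> X" "\<forall>y\<in>set ys. y \<notin> X"
    using split_list_first_prop[of p "\<lambda>v. v \<in> X"] assms(2) by blast
  then have "path_in W E (ys @ [c])" using assms(1) path_in_appendD1[of W E "ys @ [c]" zs] by simp
  with p show thesis by (intro that[of "ys @ [c]"]) (auto simp: hd_append)
qed

lemma walk_to_path:
  assumes "p \<noteq> []" "successively E p"
  shows "\<exists>q. path_in (set p) E q \<and> hd q = hd p \<and> last q = last p"
  using assms
proof (induction "length p" arbitrary: p rule: less_induct)
  case less
  show ?case
  proof (cases "distinct p")
    case False
    then obtain xs c ys zs where p: "p = xs @ [c] @ ys @ [c] @ zs"
      using not_distinct_decomp by blast
    let ?p' = "xs @ [c] @ zs"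
    have "successively E ?p'" using less.prems(2) unfolding p
      by (auto simp: successively_append_iff successively_Cons split: if_splits)
    then obtain q where q: "path_in (set ?p') E q" "hd q = hd ?p'" "last q = last ?p'"
      using less.hyps[of ?p'] p by auto
    moreover have "hd ?p' = hd p" "last ?p' = last p" "set ?p' \<subseteq> set p"
      using p by (auto simp: hd_append last_append)
    ultimately show ?thesis by (auto simp: path_in_def)
  qed (use less.prems in \<open>auto simp: path_in_def\<close>)
qed

definition joined :: "'a set \<Rightarrow> ('a \<Rightarrow> 'a \<Rightarrow> bool) \<Rightarrow> 'a \<Rightarrow> 'a \<Rightarrow> bool" where
  "joined W E a b \<longleftrightarrow> (\<exists>p. is_path W E p a b)"

lemma joined_iff_path_in: "joined W E a b \<longleftrightarrow> (\<exists>p. path_in W E p \<and> hd p = a \<and> last p = b)"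
  by (simp add: joined_def is_path_iff_path_in)

lemma joined_path_in: "path_in W E p \<Longrightarrow> joined W E (hd p) (last p)"
  by (auto simp: joined_iff_path_in)

lemma joined_edge: "a \<in> W \<Longrightarrow> b \<in> W \<Longrightarrow> E a b \<Longrightarrow> a \<noteq> b \<Longrightarrow> joined W E a b"
  by (auto simp: joined_iff_path_in path_in_def intro!: exI[of _ "[a, b]"])

lemma joined_trans: assumes "joined W E a b" "joined W E b c" shows "joined W E a c"
proof -
  obtain p q where p: "path_in W E p" "hd p = a" "last p = b"
    and q: "path_in W E q" "hd q = b" "last q = c"
    using assms by (auto simp: joined_iff_path_in)
  let ?w = "p @ tl q"
  have w: "?w \<noteq> []" "successively E ?w" "set ?w \<subseteq> W" "hd ?w = a" "last ?w = c"
    using p q by (cases q; auto simp: path_in_def successively_append_iff successively_Cons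
        dest: list.set_sel(2))+
  obtain r where "path_in (set ?w) E r" "hd r = a" "last r = c"
    using walk_to_path[OF w(1,2)] w(4,5) by auto
  with w(3) show ?thesis
    unfolding joined_iff_path_in path_in_def by auto
qed

lemma joined_sym: "symp E \<Longrightarrow> joined W E a b \<Longrightarrow> joined W E b a"
  unfolding joined_iff_path_in by (auto simp: hd_rev last_rev dest: path_in_rev)

lemma joined_mono:
  assumes "joined W E a b" "W \<subseteq> W'" "E \<le> E'"
  shows "joined W' E' a b"
proof -
  obtain p where "path_in W E p" "hd p = a" "last p = b"
    using assms(1) by (auto simp: joined_iff_path_in)
  moreover from this have "path_in W' E' p"
    using assms(2) predicate2D[OF assms(3)] by (auto simp: path_in_def elim!: successively_mono)
  ultimately show ?thesis by (auto simp: joined_iff_path_in)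
qed

section \<open>Finite witnesses for avoiding bounded obstacle sets\<close>

definition avoidance_core :: "('c \<Rightarrow> bool) \<Rightarrow> ('c \<Rightarrow> 'b set) \<Rightarrow> nat \<Rightarrow> 'b set \<Rightarrow> bool" where
  "avoidance_core P supp n F \<longleftrightarrow> finite F \<and>
     (\<forall>Ob. finite Ob \<and> card Ob \<le> n \<longrightarrow> (\<exists>p. P p \<and> supp p \<inter> Ob = {})
        \<longrightarrow> (\<exists>p. P p \<and> supp p \<subseteq> F \<and> supp p \<inter> Ob = {}))"

lemma avoidance_core_Suc:
  assumes "P p0" "finite (supp p0)"
    and Fb: "\<And>b. avoidance_core (\<lambda>p. P p \<and> b \<notin> supp p) supp n (Fb b)"
  shows "avoidance_core P supp (Suc n) (supp p0 \<union> (\<Union>b\<in>supp p0. Fb b))"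
  unfolding avoidance_core_def
proof (intro conjI allI impI)
  show "finite (supp p0 \<union> (\<Union>b\<in>supp p0. Fb b))"
    using Fb assms(2) by (simp add: avoidance_core_def)
  fix Ob assume Ob: "finite Ob \<and> card Ob \<le> Suc n" and "\<exists>p. P p \<and> supp p \<inter> Ob = {}"
  then obtain p where p: "P p" "supp p \<inter> Ob = {}" by blast
  show "\<exists>p. P p \<and> supp p \<subseteq> supp p0 \<union> (\<Union>b\<in>supp p0. Fb b) \<and> supp p \<inter> Ob = {}"
  proof (cases "supp p0 \<inter> Ob = {}")
    case True
    with assms(1) show ?thesis by blast
  next
    case False
    then obtain b where b: "b \<in> supp p0" "b \<in> Ob" by blast
    have "finite (Ob - {b})" "card (Ob - {b}) \<le> n" "supp p \<inter> (Ob - {b}) = {}" "b \<notin> supp p"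
      using Ob b p by auto
    then obtain q where "P q" "b \<notin> supp q" "supp q \<subseteq> Fb b" "supp q \<inter> (Ob - {b}) = {}"
      using Fb[of b] p(1) unfolding avoidance_core_def by blast
    with b show ?thesis by blast
  qed
qed

lemma avoidance_core_exists:
  assumes "\<And>p. P p \<Longrightarrow> finite (supp p)"
  shows "\<exists>F. avoidance_core P supp n F"
  using assms
proof (induction n arbitrary: P)
  case 0
  show ?case
  proof (cases "\<exists>p. P p")
    case True
    then obtain p0 where "P p0" ..
    with 0 have "avoidance_core P supp 0 (supp p0)" by (auto simp: avoidance_core_def)
    then show ?thesis ..
  qed (auto simp: avoidance_core_def)
next
  case (Suc n)
  show ?case
  proof (cases "\<exists>p. P p")
    case True
    then obtain p0 where p0: "P p0" ..
    have "\<exists>F. avoidance_core (\<lambda>p. P p \<and> b \<notin> supp p) supp n F" for b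
      by (rule Suc.IH) (simp add: Suc.prems)
    then obtain Fb where "\<And>b. avoidance_core (\<lambda>p. P p \<and> b \<notin> supp p) supp n (Fb b)"
      by metis
    from avoidance_core_Suc[OF p0 Suc.prems[OF p0] this] show ?thesis ..
  qed (auto simp: avoidance_core_def)
qed

section \<open>Menger's theorem\<close>

definition ab_path :: "'a set \<Rightarrow> ('a \<Rightarrow> 'a \<Rightarrow> bool) \<Rightarrow> 'a set \<Rightarrow> 'a set \<Rightarrow> 'a list \<Rightarrow> bool" where
  "ab_path W E A B p \<longleftrightarrow> path_in W E p \<and> hd p \<in> A \<and> last p \<in> B"

definition separates :: "'a set \<Rightarrow> ('a \<Rightarrow> 'a \<Rightarrow> bool) \<Rightarrow> 'a set \<Rightarrow> 'a set \<Rightarrow> 'a set \<Rightarrow> bool" where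
  "separates W E A B R \<longleftrightarrow> (\<forall>p. ab_path W E A B p \<longrightarrow> set p \<inter> R \<noteq> {})"

definition disjoint_ab_paths ::
  "'a set \<Rightarrow> ('a \<Rightarrow> 'a \<Rightarrow> bool) \<Rightarrow> 'a set \<Rightarrow> 'a set \<Rightarrow> 'a list set \<Rightarrow> bool" where
  "disjoint_ab_paths W E A B PP \<longleftrightarrow>
     finite PP \<and> (\<forall>p\<in>PP. ab_path W E A B p) \<and> disjoint_family_on set PP"

definition delete_edges :: "('a \<Rightarrow> 'a \<Rightarrow> bool) \<Rightarrow> 'a set set \<Rightarrow> 'a \<Rightarrow> 'a \<Rightarrow> bool" where
  "delete_edges E D = (\<lambda>u v. E u v \<and> {u, v} \<notin> D)"

definition reach_avoiding :: "'a set \<Rightarrow> ('a \<Rightarrow> 'a \<Rightarrow> bool) \<Rightarrow> 'a set \<Rightarrow> 'a set \<Rightarrow> 'a set" where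
  "reach_avoiding W E A S = {w. \<exists>p. ab_path (W - S) E A {w} p}"

lemma ab_path_rev: "symp E \<Longrightarrow> ab_path W E A B p \<Longrightarrow> ab_path W E B A (rev p)"
  by (auto simp: ab_path_def path_in_rev hd_rev last_rev)

lemma separates_sym: "symp E \<Longrightarrow> separates W E A B R \<Longrightarrow> separates W E B A R"
  unfolding separates_def by (metis ab_path_rev rev_rev_ident set_rev)

lemma separates_target: "separates W E A X X"
  by (auto simp: separates_def ab_path_def path_in_def dest: last_in_set)

lemma symp_delete_edges: "symp E \<Longrightarrow> symp (delete_edges E D)"
  by (auto simp: symp_def delete_edges_def insert_commute)

lemma delete_edges_le: "delete_edges E D \<le> E"
  by (simp add: delete_edges_def le_fun_def)

lemma path_in_delete_edgesD: "path_in W (delete_edges E D) p \<Longrightarrow> path_in W E p"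
  by (auto simp: path_in_def delete_edges_def elim!: successively_mono)

lemma path_in_delete_edge:
  "path_in W E p \<Longrightarrow> \<not> (x \<in> set p \<and> y \<in> set p) \<Longrightarrow> path_in W (delete_edges E {{x, y}}) p"
  by (auto simp: path_in_def delete_edges_def doubleton_eq_iff elim!: successively_mono)

lemma delete_edges_non_edge:
  assumes "symp E" "\<not> E x y"
  shows "delete_edges E {{x, y}} = E"
proof (intro ext)
  fix u v
  have "E u v \<Longrightarrow> {u, v} \<noteq> {x, y}" using assms by (metis doubleton_eq_iff sympD)
  then show "delete_edges E {{x, y}} u v = E u v" by (auto simp: delete_edges_def)
qed

lemma reach_avoiding_subset: "reach_avoiding W E A S \<subseteq> W - S"
  by (auto simp: reach_avoiding_def ab_path_def path_in_def dest: last_in_set)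

lemma path_in_reach_avoiding:
  assumes "path_in W E p" "hd p \<in> A" "set p \<inter> S = {}"
  shows "set p \<subseteq> reach_avoiding W E A S"
proof
  fix w assume "w \<in> set p"
  have "path_in (W - S) E p" using assms(1,3) by (rule path_in_restrict)
  then obtain q where "path_in (W - S) E q" "hd q = hd p" "last q = w"
    using \<open>w \<in> set p\<close> by (rule path_in_prefix_to)
  with assms(2) show "w \<in> reach_avoiding W E A S"
    by (auto simp: reach_avoiding_def ab_path_def)
qed

lemma reach_avoiding_disjoint:
  assumes "symp E" "separates W E A B S"
  shows "reach_avoiding W E A S \<inter> reach_avoiding W E B S = {}"
proof (rule ccontr)
  assume "reach_avoiding W E A S \<inter> reach_avoiding W E B S \<noteq> {}"
  then obtain w p q where p: "ab_path (W - S) E A {w} p" and q: "ab_path (W - S) E B {w} q"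
    unfolding reach_avoiding_def by blast
  have "joined (W - S) E (hd p) (last p)" "joined (W - S) E (hd q) (last q)"
    using p q joined_path_in[of "W - S" E p] joined_path_in[of "W - S" E q]
    by (simp_all add: ab_path_def)
  moreover have "last p = last q" using p q by (simp add: ab_path_def)
  ultimately have "joined (W - S) E (hd p) (hd q)"
    using joined_sym[OF assms(1)] joined_trans by metis
  then obtain r where "path_in (W - S) E r" "hd r = hd p" "last r = hd q"
    unfolding joined_iff_path_in by blast
  with p q have "ab_path W E A B r" "set r \<inter> S = {}"
    by (auto simp: ab_path_def path_in_def)
  with assms(2) show False by (auto simp: separates_def)
qed

text \<open>In the edge induction for Menger's theorem this shows that separating \<open>A\<close> from
  \<open>S + a\<close> in \<open>G - ab\<close> needs as many vertices as separating \<open>A\<close> from \<open>B\<close> in \<open>G\<close>.\<close>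
lemma separates_restore_edge:
  assumes "symp E" and E': "E' = delete_edges E {{a, b}}"
    and sepS: "separates W E' A B S" and "a \<notin> S" "b \<notin> S" "a \<noteq> b"
    and bR: "b \<in> reach_avoiding W E' B S"
    and R: "separates W E' A (insert a S) R"
  shows "separates W E A B R"
  unfolding separates_def
proof (intro allI impI)
  fix p assume p: "ab_path W E A B p"
  have "set p \<inter> insert a S \<noteq> {}"
  proof
    assume avoid: "set p \<inter> insert a S = {}"
    then have "ab_path W E' A B p"
      using p path_in_delete_edge[of W E p a b] by (auto simp: E' ab_path_def)
    with sepS avoid show False by (auto simp: separates_def)
  qed
  moreover have "path_in W E p" using p by (simp add: ab_path_def)
  ultimately obtain q where q: "path_in W E q" "hd q = hd p" "last q \<in> insert a S"
    "set (butlast q) \<inter> insert a S = {}" "set q \<subseteq> set p"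
    by (metis path_in_first_hit)
  have "b \<notin> set (butlast q)"
  proof
    assume b: "b \<in> set (butlast q)"
    then have ne: "butlast q \<noteq> []" by auto
    have "a \<notin> set (butlast q)" "set (butlast q) \<inter> S = {}" using q(4) by auto
    then have "path_in W E' (butlast q)" "set (butlast q) \<inter> S = {}"
      using path_in_butlast[OF q(1) ne] path_in_delete_edge[of W E "butlast q" a b]
      by (simp_all add: E')
    moreover have "hd (butlast q) \<in> A" using ne q(2) p by (simp add: hd_butlast ab_path_def)
    ultimately have "b \<in> reach_avoiding W E' A S" using b path_in_reach_avoiding by blast
    with bR reach_avoiding_disjoint[OF symp_delete_edges[OF assms(1)] sepS[unfolded E']]
    show False by (auto simp: E')
  qed
  then have "b \<notin> set q"
    using q(1,3) \<open>b \<notin> S\<close> \<open>a \<noteq> b\<close> set_butlast_last[of q] by (auto simp: path_in_def)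
  then have "ab_path W E' A (insert a S) q"
    using q p path_in_delete_edge[of W E q a b] by (auto simp: E' ab_path_def)
  with R q(5) show "set p \<inter> R \<noteq> {}" by (auto simp: separates_def)
qed

definition linkage :: "'a set \<Rightarrow> ('a \<Rightarrow> 'a \<Rightarrow> bool) \<Rightarrow> 'a set \<Rightarrow> 'a set \<Rightarrow> ('a \<Rightarrow> 'a list) \<Rightarrow> bool" where
  "linkage W E A X P \<longleftrightarrow>
     (\<forall>s\<in>X. ab_path W E A {s} (P s) \<and> set (butlast (P s)) \<inter> X = {}) \<and>
     disjoint_family_on (\<lambda>s. set (P s)) X"

lemma disjoint_paths_image:
  assumes "disjoint_family_on (\<lambda>s. set (P s)) X" "\<And>s. s \<in> X \<Longrightarrow> P s \<noteq> []"
  shows "card (P ` X) = card X" "disjoint_family_on set (P ` X)"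
proof -
  have "inj_on P X"
    using assms by (fastforce simp: inj_on_def disjoint_family_on_def)
  then show "card (P ` X) = card X" by (rule card_image)
  show "disjoint_family_on set (P ` X)"
    using assms(1) by (force simp: disjoint_family_on_def)
qed

lemma disjoint_ab_paths_first_hits:
  assumes "disjoint_ab_paths W E A X PP"
  shows "\<exists>PP'. card PP' = card PP \<and> disjoint_ab_paths W E A X PP' \<and>
    (\<forall>p\<in>PP'. set (butlast p) \<inter> X = {})"
proof -
  have "\<exists>q. path_in W E q \<and> hd q = hd p \<and> last q \<in> X \<and> set (butlast q) \<inter> X = {} \<and> set q \<subseteq> set p"
    if "p \<in> PP" for p
  proof -
    have "path_in W E p" "last p \<in> X" using assms that by (auto simp: disjoint_ab_paths_def ab_path_def)
    then have "set p \<inter> X \<noteq> {}" by (metis disjoint_iff last_in_set path_in_def)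
    with \<open>path_in W E p\<close> show ?thesis by (metis path_in_first_hit)
  qed
  then obtain tr where tr: "\<And>p. p \<in> PP \<Longrightarrow> path_in W E (tr p) \<and> hd (tr p) = hd p \<and>
      last (tr p) \<in> X \<and> set (butlast (tr p)) \<inter> X = {} \<and> set (tr p) \<subseteq> set p"
    by metis
  have "disjoint_family_on set PP" using assms by (simp add: disjoint_ab_paths_def)
  then have disj: "disjoint_family_on (\<lambda>p. set (tr p)) PP"
    by (rule disjoint_family_on_bisimulation) (use tr in blast)
  have ne: "tr p \<noteq> []" if "p \<in> PP" for p using tr[OF that] by (simp add: path_in_def)
  note disjoint_paths_image[OF disj ne]
  moreover have "\<forall>q\<in>tr ` PP. ab_path W E A X q \<and> set (butlast q) \<inter> X = {}"
    using tr assms by (auto simp: disjoint_ab_paths_def ab_path_def)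
  ultimately show ?thesis using assms by (intro exI[of _ "tr ` PP"]) (auto simp: disjoint_ab_paths_def)
qed

lemma linkage_from_disjoint_paths:
  assumes "finite X" "disjoint_ab_paths W E A X PP0" "card PP0 = card X"
  shows "\<exists>P. linkage W E A X P"
proof -
  obtain PP where PP: "card PP = card X" "disjoint_ab_paths W E A X PP"
    "\<forall>p\<in>PP. set (butlast p) \<inter> X = {}"
    using disjoint_ab_paths_first_hits[OF assms(2)] assms(3) by auto
  have last_in: "last p \<in> set p \<inter> X" if "p \<in> PP" for p
    using PP(2) that by (auto simp: disjoint_ab_paths_def ab_path_def path_in_def)
  have inj: "inj_on last PP"
  proof (rule inj_onI)
    fix p q assume "p \<in> PP" "q \<in> PP" "last p = last q"
    then have "set p \<inter> set q \<noteq> {}" using last_in[of p] last_in[of q] by auto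
    with \<open>p \<in> PP\<close> \<open>q \<in> PP\<close> show "p = q"
      using PP(2) by (auto simp: disjoint_ab_paths_def disjoint_family_on_def)
  qed
  have "last ` PP \<subseteq> X" using last_in by blast
  then have img: "last ` PP = X"
    using card_subset_eq[OF assms(1)] card_image[OF inj] PP(1) by simp
  define P where "P s = inv_into PP last s" for s
  have P: "P s \<in> PP" "last (P s) = s" if "s \<in> X" for s
    using img that unfolding P_def by (auto intro: inv_into_into f_inv_into_f)
  have "ab_path W E A {s} (P s) \<and> set (butlast (P s)) \<inter> X = {}" if "s \<in> X" for s
  proof -
    have "ab_path W E A X (P s)" "set (butlast (P s)) \<inter> X = {}"
      using P(1)[OF that] PP(2,3) by (simp_all add: disjoint_ab_paths_def)
    with P(2)[OF that] show ?thesis by (simp add: ab_path_def)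
  qed
  moreover have "disjoint_family_on (\<lambda>s. set (P s)) X"
    unfolding disjoint_family_on_def
  proof (intro ballI impI)
    fix s t assume st: "s \<in> X" "t \<in> X" "s \<noteq> t"
    then have "P s \<noteq> P t" using P by metis
    with st P(1) PP(2) show "set (P s) \<inter> set (P t) = {}"
      by (auto simp: disjoint_ab_paths_def disjoint_family_on_def)
  qed
  ultimately show ?thesis unfolding linkage_def by blast
qed

lemma linkage_butlast_reach:
  assumes "linkage W E A X P" "S \<subseteq> X" "s \<in> X"
  shows "set (butlast (P s)) \<subseteq> reach_avoiding W E A S"
proof (cases "butlast (P s) = []")
  case False
  have P: "path_in W E (P s)" "hd (P s) \<in> A" "set (butlast (P s)) \<inter> X = {}"
    using assms(1,3) by (auto simp: linkage_def ab_path_def)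
  have "path_in W E (butlast (P s))" using path_in_butlast P(1) False by blast
  moreover have "hd (butlast (P s)) \<in> A" using hd_butlast[OF False] P(2) by simp
  moreover have "set (butlast (P s)) \<inter> S = {}" using P(3) assms(2) by blast
  ultimately show ?thesis by (rule path_in_reach_avoiding)
qed simp

lemma linkage_set_last:
  "linkage W E A X P \<Longrightarrow> s \<in> X \<Longrightarrow> set (P s) = insert s (set (butlast (P s)))"
  using set_butlast_last[of "P s"] by (auto simp: linkage_def ab_path_def path_in_def)

lemma linkage_mono:
  assumes "linkage W E' A X P" "E' \<le> E"
  shows "linkage W E A X P"
  using assms(1) predicate2D[OF assms(2)]
  by (auto simp: linkage_def ab_path_def path_in_def elim!: successively_mono)

lemma ab_path_join_at_end:
  assumes "symp E" "ab_path W E A {s} p" "ab_path W E B {s} q" "set p \<inter> set (butlast q) = {}"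
  shows "ab_path W E A B (p @ rev (butlast q))"
proof (cases "butlast q = []")
  case True
  then have "q = [s]" using assms(3) by (metis ab_path_def append_butlast_last_id append_Nil path_in_def singletonD)
  with True assms(2,3) show ?thesis by (auto simp: ab_path_def)
next
  case False
  have q: "path_in W E (butlast q @ [s])" using assms(3)
    by (metis ab_path_def append_butlast_last_id path_in_def singletonD)
  then have "E (last (butlast q)) s"
    using False by (simp add: path_in_def successively_append_iff)
  then have "E (last p) (hd (rev (butlast q)))"
    using assms(1,2) False by (auto simp: ab_path_def hd_rev dest: sympD)
  moreover have "path_in W E (rev (butlast q))"
    using path_in_appendD1[OF q False] assms(1) by (rule path_in_rev[rotated])
  ultimately have "path_in W E (p @ rev (butlast q))"
    using assms(2,4) by (intro path_in_append) (auto simp: ab_path_def)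
  moreover have "hd (butlast q) = hd q" using False by (rule hd_butlast)
  ultimately show ?thesis
    using assms(2,3) False by (auto simp: ab_path_def last_rev path_in_def)
qed

lemma ab_path_join_edge:
  assumes "symp E" "ab_path W E A {a} p" "ab_path W E B {b} q" "E a b" "set p \<inter> set q = {}"
  shows "ab_path W E A B (p @ rev q)"
proof -
  have "path_in W E (p @ rev q)"
    using assms by (intro path_in_append) (auto simp: ab_path_def path_in_rev hd_rev)
  with assms(2,3) show ?thesis by (auto simp: ab_path_def last_rev path_in_def)
qed

text \<open>The paths ending in \<open>S + a\<close> and in \<open>S + b\<close> are glued at \<open>S\<close> and along the edge
  \<open>ab\<close>; they stay disjoint because their parts before \<open>S\<close> lie on the two sides of the
  separator \<open>S\<close>.\<close>
lemma glue_linkages: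
  assumes "symp E" "E' \<le> E" "E a b" "a \<notin> S" "b \<notin> S" "finite S"
    and disj: "reach_avoiding W E' A S \<inter> reach_avoiding W E' B S = {}"
    and aR: "a \<in> reach_avoiding W E' A S" and bR: "b \<in> reach_avoiding W E' B S"
    and P: "linkage W E' A (insert a S) P" and Q: "linkage W E' B (insert b S) Q"
  shows "\<exists>PP. card PP = Suc (card S) \<and> disjoint_ab_paths W E A B PP"
proof -
  let ?RA = "reach_avoiding W E' A S" and ?RB = "reach_avoiding W E' B S"
  define \<sigma> where "\<sigma> s = (if s = a then b else s)" for s
  define Q' where "Q' s = (if s = a then Q b else butlast (Q s))" for s
  define R where "R s = P s @ rev (Q' s)" for s
  have RS: "?RA \<inter> S = {}" "?RB \<inter> S = {}" using reach_avoiding_subset by fastforce+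
  have P_RB: "set (P s) \<inter> ?RB = {}" if "s \<in> insert a S" for s
  proof -
    have "s \<notin> ?RB" using that aR disj RS by auto
    with linkage_butlast_reach[OF P subset_insertI that] show ?thesis
      unfolding linkage_set_last[OF P that] using disj by blast
  qed
  have \<sigma>: "\<sigma> s \<in> insert b S" "t \<in> insert a S \<Longrightarrow> s \<noteq> t \<Longrightarrow> \<sigma> s \<noteq> \<sigma> t" if "s \<in> insert a S" for s t
    using that \<open>a \<notin> S\<close> \<open>b \<notin> S\<close> by (auto simp: \<sigma>_def)
  have Q'_RB: "set (Q' s) \<subseteq> set (Q (\<sigma> s)) \<inter> ?RB" if "s \<in> insert a S" for s
    using linkage_butlast_reach[OF Q subset_insertI \<sigma>(1)[OF that]] linkage_set_last[OF Q insertI1]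
      that bR by (auto simp: Q'_def \<sigma>_def dest: in_set_butlastD)
  have PE: "ab_path W E A {s} (P s)" if "s \<in> insert a S" for s
    using linkage_mono[OF P assms(2)] that by (auto simp: linkage_def)
  have QE: "ab_path W E B {t} (Q t)" if "t \<in> insert b S" for t
    using linkage_mono[OF Q assms(2)] that by (auto simp: linkage_def)
  have "ab_path W E A B (R s)" if s: "s \<in> insert a S" for s
  proof (cases "s = a")
    case True
    then have "set (P a) \<inter> set (Q b) = {}" using P_RB[OF s] Q'_RB[OF s] by (auto simp: Q'_def)
    with True show ?thesis
      using ab_path_join_edge[OF assms(1) PE[OF insertI1] QE[OF insertI1] \<open>E a b\<close>]
      by (simp add: R_def Q'_def)
  next
    case False
    with s have "s \<in> S" "set (P s) \<inter> set (butlast (Q s)) = {}"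
      using P_RB[OF s] Q'_RB[OF s] by (auto simp: Q'_def)
    with False show ?thesis
      using ab_path_join_at_end[OF assms(1) PE[OF s] QE[of s]] by (simp add: R_def Q'_def)
  qed
  moreover have "disjoint_family_on (\<lambda>s. set (R s)) (insert a S)"
    unfolding disjoint_family_on_def
  proof (intro ballI impI)
    fix s t assume st: "s \<in> insert a S" "t \<in> insert a S" "s \<noteq> t"
    have "set (P s) \<inter> set (P t) = {}" "set (Q (\<sigma> s)) \<inter> set (Q (\<sigma> t)) = {}"
      using P Q \<sigma> st unfolding linkage_def by (meson disjoint_family_onD)+
    with P_RB[OF st(1)] P_RB[OF st(2)] Q'_RB[OF st(1)] Q'_RB[OF st(2)]
    show "set (R s) \<inter> set (R t) = {}" unfolding R_def set_append set_rev by blast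
  qed
  moreover have "R s \<noteq> []" if "s \<in> insert a S" for s
    using PE[OF that] by (auto simp: R_def ab_path_def path_in_def)
  ultimately show ?thesis
    using disjoint_paths_image[of R "insert a S"] \<open>a \<notin> S\<close> \<open>finite S\<close>
    by (intro exI[of _ "R ` insert a S"]) (auto simp: disjoint_ab_paths_def)
qed

lemma disjoint_ab_paths_mono:
  assumes "disjoint_ab_paths W E' A B PP" "E' \<le> E"
  shows "disjoint_ab_paths W E A B PP"
  using assms(1) predicate2D[OF assms(2)]
  by (auto simp: disjoint_ab_paths_def ab_path_def path_in_def elim!: successively_mono)

lemma disjoint_ab_paths_rev:
  assumes "symp E" "disjoint_ab_paths W E A B PP"
  shows "disjoint_ab_paths W E B A (rev ` PP)" "card (rev ` PP) = card PP"
proof -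
  show "disjoint_ab_paths W E B A (rev ` PP)"
    using assms ab_path_rev by (fastforce simp: disjoint_ab_paths_def disjoint_family_on_def)
  show "card (rev ` PP) = card PP" by (simp add: card_image)
qed

lemma menger_without_edges:
  assumes "finite W" "\<And>u v. u \<in> W \<Longrightarrow> v \<in> W \<Longrightarrow> \<not> E u v"
    and big: "\<And>R. R \<subseteq> W \<Longrightarrow> separates W E A B R \<Longrightarrow> k \<le> card R"
  shows "\<exists>PP. card PP = k \<and> disjoint_ab_paths W E A B PP"
proof -
  have single: "p = [hd p]" if "path_in W E p" for p
    using that assms(2) by (cases p rule: remdups_adj.cases) (auto simp: path_in_def)
  have "separates W E A B (A \<inter> B \<inter> W)"
    unfolding separates_def ab_path_def
    by (metis single disjoint_iff IntI last.simps list.set_intros(1) path_in_def subsetD)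
  with big have "k \<le> card (A \<inter> B \<inter> W)" by blast
  then obtain R where R: "R \<subseteq> A \<inter> B \<inter> W" "card R = k" by (meson obtain_subset_with_card_n)
  moreover from R(1) assms(1) have "finite R" by (meson finite_subset le_infE)
  ultimately have "card ((\<lambda>a. [a]) ` R) = k" "disjoint_ab_paths W E A B ((\<lambda>a. [a]) ` R)"
    by (auto simp: card_image inj_on_def disjoint_ab_paths_def ab_path_def path_in_def
        disjoint_family_on_def)
  then show ?thesis by blast
qed

lemma deleted_edge_on_path:
  assumes "symp E" and E': "E' = delete_edges E {{x, y}}"
    and sepS: "separates W E' A B S" and p: "ab_path W E A B p" "set p \<inter> S = {}"
  obtains a b where "{a, b} = {x, y}" "E a b" "a \<noteq> b" "a \<notin> S" "b \<notin> S"
    "a \<in> reach_avoiding W E' A S" "b \<in> reach_avoiding W E' B S"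
proof -
  have "\<not> path_in W E' p"
    using sepS p by (auto simp: separates_def ab_path_def)
  then obtain i where i: "Suc i < length p" "\<not> E' (p ! i) (p ! Suc i)"
    using p by (auto simp: path_in_def ab_path_def successively_conv_nth)
  define a b where "a = p ! i" and "b = p ! Suc i"
  have "E a b" "distinct p"
    using p i(1) by (auto simp: a_def b_def ab_path_def path_in_def successively_conv_nth)
  with i(2) have ab: "{a, b} = {x, y}" by (simp add: E' a_def b_def delete_edges_def)
  define r1 r2 where "r1 = take (Suc i) p" and "r2 = drop (Suc i) p"
  have p_split: "p = r1 @ r2" by (simp add: r1_def r2_def)
  have ends: "r1 \<noteq> []" "r2 \<noteq> []" "last r1 = a" "hd r2 = b"
    using i(1) by (auto simp: r1_def r2_def a_def b_def take_Suc_conv_app_nth hd_drop_conv_nth)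
  then have r12: "a \<in> set r1" "b \<in> set r2" "set r1 \<inter> set r2 = {}"
    using \<open>distinct p\<close> p_split by (auto simp: last_in_set hd_in_set dest: distinct_append[THEN iffD1])
  have "path_in W E r1" "path_in W E r2"
    using p(1) p_split ends path_in_appendD1 path_in_appendD2 by (metis ab_path_def)+
  then have r1: "path_in W E' r1" and r2: "path_in W E' r2"
    using r12 ab path_in_delete_edge[of W E] by (metis E' disjoint_iff insert_commute)+
  have symE': "symp E'" unfolding E' using assms(1) by (rule symp_delete_edges)
  have "set r1 \<subseteq> reach_avoiding W E' A S"
    using r1 by (rule path_in_reach_avoiding) (use p p_split ends in \<open>auto simp: ab_path_def\<close>)
  moreover have "set (rev r2) \<subseteq> reach_avoiding W E' B S"
    using path_in_rev[OF symE' r2] by (rule path_in_reach_avoiding)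
      (use p p_split ends in \<open>auto simp: ab_path_def hd_rev\<close>)
  moreover have "a \<notin> S" "b \<notin> S" "a \<noteq> b" using r12 p_split p(2) by auto
  ultimately show thesis using that ab \<open>E a b\<close> r12 by auto
qed

lemma menger_edge_step:
  assumes "symp E" "finite S" and E': "E' = delete_edges E {{a, b}}"
    and "E a b" "a \<noteq> b" "a \<notin> S" "b \<notin> S" and sepS: "separates W E' A B S"
    and aR: "a \<in> reach_avoiding W E' A S" and bR: "b \<in> reach_avoiding W E' B S"
    and big: "\<And>R. R \<subseteq> W \<Longrightarrow> separates W E A B R \<Longrightarrow> Suc (card S) \<le> card R"
    and IH: "\<And>A B. (\<And>R. R \<subseteq> W \<Longrightarrow> separates W E' A B R \<Longrightarrow> Suc (card S) \<le> card R) \<Longrightarrow>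
      \<exists>PP. card PP = Suc (card S) \<and> disjoint_ab_paths W E' A B PP"
  shows "\<exists>PP. card PP = Suc (card S) \<and> disjoint_ab_paths W E A B PP"
proof -
  have symE': "symp E'" unfolding E' using assms(1) by (rule symp_delete_edges)
  have E'_ba: "E' = delete_edges E {{b, a}}" by (simp add: E' insert_commute)
  have "Suc (card S) \<le> card R" if "R \<subseteq> W" "separates W E' A (insert a S) R" for R
    using separates_restore_edge[OF assms(1) E' sepS \<open>a \<notin> S\<close> \<open>b \<notin> S\<close> \<open>a \<noteq> b\<close> bR that(2)]
      big that(1) by blast
  then obtain PA where PA: "card PA = Suc (card S)" "disjoint_ab_paths W E' A (insert a S) PA"
    using IH by blast
  have "Suc (card S) \<le> card R" if "R \<subseteq> W" "separates W E' (insert b S) B R" for R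
  proof -
    have "separates W E B A R"
      using separates_restore_edge[OF assms(1) E'_ba separates_sym[OF symE' sepS]
          \<open>b \<notin> S\<close> \<open>a \<notin> S\<close> _ aR separates_sym[OF symE' that(2)]] \<open>a \<noteq> b\<close> by blast
    then show ?thesis using big that(1) separates_sym[OF assms(1)] by blast
  qed
  then obtain PB where PB: "card PB = Suc (card S)" "disjoint_ab_paths W E' (insert b S) B PB"
    using IH by blast
  have card_insert: "card (insert a S) = Suc (card S)" "card (insert b S) = Suc (card S)"
    using assms(2,6,7) by simp_all
  obtain P where "linkage W E' A (insert a S) P"
    using linkage_from_disjoint_paths[OF _ PA(2)] PA(1) card_insert assms(2) by auto
  moreover obtain Q where "linkage W E' B (insert b S) Q"
    using linkage_from_disjoint_paths[OF _ disjoint_ab_paths_rev(1)[OF symE' PB(2)]]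
      disjoint_ab_paths_rev(2)[OF symE' PB(2)] PB(1) card_insert assms(2) by auto
  moreover have "reach_avoiding W E' A S \<inter> reach_avoiding W E' B S = {}"
    using symE' sepS by (rule reach_avoiding_disjoint)
  moreover have "E' \<le> E" unfolding E' by (rule delete_edges_le)
  ultimately show ?thesis
    using glue_linkages[OF assms(1) _ \<open>E a b\<close> \<open>a \<notin> S\<close> \<open>b \<notin> S\<close> assms(2) _ aR bR] by blast
qed

lemma card_edges_delete_edge:
  assumes "finite W" "x \<in> W" "y \<in> W" "E x y"
  shows "card {(u, v) \<in> W \<times> W. delete_edges E {{x, y}} u v} < card {(u, v) \<in> W \<times> W. E u v}"
proof -
  have "(x, y) \<in> {(u, v) \<in> W \<times> W. E u v}" "(x, y) \<notin> {(u, v) \<in> W \<times> W. delete_edges E {{x, y}} u v}"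
    using assms by (simp_all add: delete_edges_def)
  moreover have "{(u, v) \<in> W \<times> W. delete_edges E {{x, y}} u v} \<subseteq> {(u, v) \<in> W \<times> W. E u v}"
    by (auto simp: delete_edges_def)
  moreover have "finite {(u, v) \<in> W \<times> W. E u v}"
    using finite_cartesian_product[OF assms(1) assms(1)] by (rule finite_subset[rotated]) auto
  moreover from calculation(1-3)
  have "{(u, v) \<in> W \<times> W. delete_edges E {{x, y}} u v} \<subset> {(u, v) \<in> W \<times> W. E u v}" by blast
  ultimately show ?thesis by (simp add: psubset_card_mono)
qed

lemma menger_via_small_separator:
  assumes "symp E" "finite W" and E': "E' = delete_edges E {{x, y}}"
    and S: "S \<subseteq> W" "separates W E' A B S" "card S < k"
    and big: "\<And>R. R \<subseteq> W \<Longrightarrow> separates W E A B R \<Longrightarrow> k \<le> card R"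
    and IH: "\<And>A B. (\<And>R. R \<subseteq> W \<Longrightarrow> separates W E' A B R \<Longrightarrow> k \<le> card R) \<Longrightarrow>
      \<exists>PP. card PP = k \<and> disjoint_ab_paths W E' A B PP"
  shows "\<exists>PP. card PP = k \<and> disjoint_ab_paths W E A B PP"
proof -
  have "\<not> separates W E A B S" using big[OF S(1)] S(3) leD by blast
  then obtain p where "ab_path W E A B p" "set p \<inter> S = {}" by (auto simp: separates_def)
  then obtain a b where ab: "{a, b} = {x, y}" "E a b" "a \<noteq> b" "a \<notin> S" "b \<notin> S"
    "a \<in> reach_avoiding W E' A S" "b \<in> reach_avoiding W E' B S"
    using deleted_edge_on_path[OF assms(1) E' S(2)] by blast
  have E'_ab: "E' = delete_edges E {{a, b}}" using ab(1) by (simp add: E')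
  have "finite S" using S(1) assms(2) by (rule finite_subset)
  have "separates W E A B (insert a S)"
    using separates_restore_edge[OF assms(1) E'_ab S(2) ab(4,5,3,7) separates_target] .
  moreover have "insert a S \<subseteq> W" using ab(6) S(1) reach_avoiding_subset[of W E' A S] by blast
  ultimately have "k \<le> card (insert a S)" by (rule big[rotated])
  with S(3) \<open>finite S\<close> ab(4) have k: "k = Suc (card S)" by simp
  from menger_edge_step[OF assms(1) \<open>finite S\<close> E'_ab ab(2-5) S(2) ab(6,7) big[unfolded k]
      IH[unfolded k]]
  show ?thesis unfolding k .
qed

theorem menger_finite:
  assumes "finite W" "symp E" "\<And>R. R \<subseteq> W \<Longrightarrow> separates W E A B R \<Longrightarrow> k \<le> card R"
  shows "\<exists>PP. card PP = k \<and> disjoint_ab_paths W E A B PP"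
  using assms
proof (induction "card {(u, v) \<in> W \<times> W. E u v}" arbitrary: E A B k rule: less_induct)
  case less
  show ?case
  proof (cases "\<exists>x\<in>W. \<exists>y\<in>W. E x y")
    case False
    then show ?thesis by (intro menger_without_edges[OF less.prems(1) _ less.prems(3)]) auto
  next
    case True
    then obtain x y where xy: "x \<in> W" "y \<in> W" "E x y" by blast
    define E' where "E' = delete_edges E {{x, y}}"
    have IH: "\<exists>PP. card PP = k' \<and> disjoint_ab_paths W E' A' B' PP"
      if "\<And>R. R \<subseteq> W \<Longrightarrow> separates W E' A' B' R \<Longrightarrow> k' \<le> card R" for A' B' k'
      using less.hyps[OF _ less.prems(1) symp_delete_edges[OF less.prems(2)] that]
        card_edges_delete_edge[where E = E, OF less.prems(1) xy] by (simp add: E'_def)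
    show ?thesis
    proof (cases "\<forall>R. R \<subseteq> W \<longrightarrow> separates W E' A B R \<longrightarrow> k \<le> card R")
      case True
      then obtain PP where "card PP = k" "disjoint_ab_paths W E' A B PP" using IH by blast
      then show ?thesis using disjoint_ab_paths_mono[OF _ delete_edges_le] unfolding E'_def by blast
    next
      case False
      then obtain S where "S \<subseteq> W" "separates W E' A B S" "card S < k" by (meson not_le)
      from menger_via_small_separator[OF less.prems(2,1) E'_def this less.prems(3) IH]
      show ?thesis .
    qed
  qed
qed

lemma interior_wrap [simp]: "interior (x # q @ [y]) = set q"
  by (simp add: interior_def)

lemma is_path_unwrap:
  assumes "is_path W E p x y" "\<not> E x y" "x \<noteq> y"
  shows "\<exists>q. p = x # q @ [y] \<and> ab_path (W - {x, y}) E {w. E x w} {w. E w y} q"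
proof -
  obtain q where p: "p = x # q @ [y]"
    using assms(1,3) unfolding is_path_iff_path_in path_in_def
    by (metis append_butlast_last_id hd_Cons_tl last_ConsL last_tl)
  with assms have "q \<noteq> []" by (auto simp: is_path_iff_path_in path_in_def)
  with p assms(1) have "ab_path (W - {x, y}) E {w. E x w} {w. E w y} q"
    by (auto simp: is_path_iff_path_in path_in_def ab_path_def successively_append_iff
        successively_Cons hd_append)
  with p show ?thesis by blast
qed

lemma is_path_wrap:
  assumes "ab_path (W - {x, y}) E {w. E x w} {w. E w y} q" "x \<in> W" "y \<in> W" "x \<noteq> y"
  shows "is_path W E (x # q @ [y]) x y"
  using assms by (auto simp: is_path_iff_path_in path_in_def ab_path_def successively_append_iff
      successively_Cons hd_append)

lemma menger_local_finite:
  assumes "finite W" "symp E" "x \<in> W" "y \<in> W" "x \<noteq> y" "\<not> E x y"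
    and conn: "\<And>Z. finite Z \<Longrightarrow> card Z < k \<Longrightarrow> x \<notin> Z \<Longrightarrow> y \<notin> Z \<Longrightarrow> joined (W - Z) E x y"
  shows "\<exists>PP. card PP = k \<and> finite PP \<and> (\<forall>p\<in>PP. is_path W E p x y) \<and> disjoint_family_on interior PP"
proof -
  let ?W = "W - {x, y}" and ?A = "{w. E x w}" and ?B = "{w. E w y}"
  have "k \<le> card R" if R: "R \<subseteq> ?W" "separates ?W E ?A ?B R" for R
  proof (rule ccontr)
    assume "\<not> k \<le> card R"
    moreover have "finite R" using R(1) assms(1) by (meson finite_Diff finite_subset)
    ultimately have "joined (W - R) E x y" using R(1) by (intro conn) auto
    then obtain p where "is_path (W - R) E p x y" by (auto simp: joined_def)
    then obtain q where "ab_path (W - R - {x, y}) E ?A ?B q"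
      using is_path_unwrap assms(5,6) by metis
    then have "ab_path ?W E ?A ?B q" "set q \<inter> R = {}" by (auto simp: ab_path_def path_in_def)
    with R(2) show False by (auto simp: separates_def)
  qed
  from menger_finite[OF finite_Diff[OF assms(1)] assms(2) this]
  obtain PP where PP: "card PP = k" "disjoint_ab_paths ?W E ?A ?B PP" by blast
  let ?wrap = "\<lambda>q. x # q @ [y]"
  have "card (?wrap ` PP) = k" using PP(1) by (simp add: card_image inj_on_def)
  moreover have "\<forall>p\<in>?wrap ` PP. is_path W E p x y"
    using PP(2) is_path_wrap[OF _ assms(3-5)] unfolding disjoint_ab_paths_def by blast
  moreover have "disjoint_family_on interior (?wrap ` PP)"
    using PP(2) unfolding disjoint_ab_paths_def disjoint_family_on_def by auto
  ultimately show ?thesis using PP(2) by (auto simp: disjoint_ab_paths_def)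
qed

theorem menger_local:
  assumes "symp E" "x \<in> W" "y \<in> W" "x \<noteq> y" "\<not> E x y"
    and conn: "\<And>Z. finite Z \<Longrightarrow> card Z < k \<Longrightarrow> x \<notin> Z \<Longrightarrow> y \<notin> Z \<Longrightarrow> joined (W - Z) E x y"
  shows "\<exists>PP. card PP = k \<and> finite PP \<and> (\<forall>p\<in>PP. is_path W E p x y) \<and> disjoint_family_on interior PP"
proof -
  obtain F where F: "avoidance_core (\<lambda>p. is_path W E p x y) (\<lambda>p. set p - {x, y}) (k - 1) F"
    using avoidance_core_exists[of "\<lambda>p. is_path W E p x y" "\<lambda>p. set p - {x, y}"] by blast
  define W0 where "W0 = W \<inter> insert x (insert y F)"
  have "joined (W0 - Z) E x y" if Z: "finite Z" "card Z < k" "x \<notin> Z" "y \<notin> Z" for Z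
  proof -
    obtain p where "is_path (W - Z) E p x y" using conn Z by (auto simp: joined_def)
    then have "is_path W E p x y" "(set p - {x, y}) \<inter> Z = {}"
      by (auto simp: is_path_iff_path_in path_in_def)
    moreover have "card Z \<le> k - 1" using Z(2) by linarith
    ultimately obtain q where q: "is_path W E q x y" "set q - {x, y} \<subseteq> F" "(set q - {x, y}) \<inter> Z = {}"
      using F Z(1) unfolding avoidance_core_def by blast
    then have "is_path (W0 - Z) E q x y"
      using Z(3,4) by (auto simp: W0_def is_path_iff_path_in path_in_def)
    then show ?thesis by (auto simp: joined_def)
  qed
  moreover have "finite W0" using F by (simp add: W0_def avoidance_core_def)
  moreover have "x \<in> W0" "y \<in> W0" using assms(2,3) by (auto simp: W0_def)
  ultimately obtain PP where "card PP = k" "finite PP" "\<forall>p\<in>PP. is_path W0 E p x y"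
    "disjoint_family_on interior PP"
    using menger_local_finite[OF _ assms(1) _ _ assms(4,5)] by blast
  moreover have "is_path W E p x y" if "is_path W0 E p x y" for p
    using that by (auto simp: W0_def is_path_iff_path_in path_in_def)
  ultimately show ?thesis by blast
qed

lemma three_internally_disjoint_paths:
  assumes "symp E" "x \<in> W" "y \<in> W" "x \<noteq> y"
    and conn: "\<And>Z. finite Z \<Longrightarrow> card Z + of_bool (E x y) \<le> 2 \<Longrightarrow> x \<notin> Z \<Longrightarrow> y \<notin> Z \<Longrightarrow>
      joined (W - Z) (delete_edges E {{x, y}}) x y"
  shows "\<exists>PP. card PP = 3 \<and> (\<forall>p\<in>PP. is_path W E p x y) \<and> disjoint_family_on interior PP"
proof -
  let ?E' = "delete_edges E {{x, y}}" and ?k = "3 - of_bool (E x y)"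
  have nonadj: "\<not> ?E' x y" by (simp add: delete_edges_def)
  have "joined (W - Z) ?E' x y" if "finite Z" "card Z < ?k" "x \<notin> Z" "y \<notin> Z" for Z
    using that by (intro conn) auto
  from menger_local[OF symp_delete_edges[OF assms(1)] assms(2-4) nonadj this]
  obtain PP where PP: "card PP = ?k" "finite PP" "\<forall>p\<in>PP. is_path W ?E' p x y"
    "disjoint_family_on interior PP" by blast
  have paths: "\<forall>p\<in>PP. is_path W E p x y"
    using PP(3) by (auto simp: is_path_iff_path_in dest: path_in_delete_edgesD)
  show ?thesis
  proof (cases "E x y")
    case True
    have "[x, y] \<notin> PP"
      using PP(3) by (auto simp: is_path_iff_path_in path_in_def delete_edges_def)
    moreover have "is_path W E [x, y] x y"
      using True assms(2-4) by (simp add: is_path_iff_path_in path_in_def)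
    moreover have "interior [x, y] = {}" by (simp add: interior_def)
    ultimately show ?thesis
      using True PP paths by (intro exI[of _ "insert [x, y] PP"]) (simp add: disjoint_family_on_insert)
  qed (use PP paths in auto)
qed

lemma set_three_connected_inI:
  assumes "\<And>x y. x \<in> X \<Longrightarrow> y \<in> X \<Longrightarrow> x \<noteq> y \<Longrightarrow>
    \<exists>PP. card PP = 3 \<and> (\<forall>p\<in>PP. is_path W E p x y) \<and> disjoint_family_on interior PP"
  shows "set_three_connected_in X W E"
  unfolding set_three_connected_in_def
proof (intro ballI impI)
  fix x y assume "x \<in> X" "y \<in> X" "x \<noteq> y"
  then obtain PP where PP: "card PP = 3" "\<forall>p\<in>PP. is_path W E p x y" "disjoint_family_on interior PP"
    using assms by blast
  then obtain p1 p2 p3 where PP3: "PP = {p1, p2, p3}" and ne: "p1 \<noteq> p2" "p1 \<noteq> p3" "p2 \<noteq> p3"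
    by (auto simp: card_3_iff)
  then have "is_path W E p1 x y" "is_path W E p2 x y" "is_path W E p3 x y"
    using PP(2) by simp_all
  moreover have "interior p1 \<inter> interior p2 = {}" "interior p1 \<inter> interior p3 = {}"
    "interior p2 \<inter> interior p3 = {}"
    using PP(3) ne by (simp_all add: PP3 disjoint_family_onD)
  ultimately show "\<exists>p1 p2 p3. is_path W E p1 x y \<and> is_path W E p2 x y \<and> is_path W E p3 x y \<and>
      p1 \<noteq> p2 \<and> p1 \<noteq> p3 \<and> p2 \<noteq> p3 \<and> interior p1 \<inter> interior p2 = {} \<and>
      interior p1 \<inter> interior p3 = {} \<and> interior p2 \<inter> interior p3 = {}"
    using ne by blast
qed

section \<open>Connectivity across a finite vertex set\<close>

lemma graph_symp: "graph V E \<Longrightarrow> symp E"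
  by (auto simp: graph_def symp_def)

lemma component_of_subset: "component_of W E H \<Longrightarrow> H \<subseteq> W"
  by (auto simp: component_of_def is_path_iff_path_in path_in_def)

lemma component_of_joined:
  assumes "symp E" "component_of W E H" "h \<in> H" "h' \<in> H"
  shows "joined H E h h'"
proof -
  obtain x0 where H: "H = {w. joined W E x0 w}"
    using assms(2) by (auto simp: component_of_def joined_def)
  then have x0: "joined W E x0 h" "joined W E x0 h'" using assms(3,4) by auto
  have "joined W E h h'" using joined_trans[OF joined_sym[OF assms(1) x0(1)] x0(2)] .
  then obtain q where q: "path_in W E q" "hd q = h" "last q = h'" by (auto simp: joined_iff_path_in)
  have "set q \<subseteq> H"
  proof
    fix w assume "w \<in> set q"
    with q(1) obtain r where r: "path_in W E r" "hd r = hd q" "last r = w" by (rule path_in_prefix_to)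
    have "joined W E h w" using joined_path_in[OF r(1)] r(2,3) q(2) by simp
    then show "w \<in> H" using joined_trans[OF x0(1)] H by simp
  qed
  with q show ?thesis by (auto simp: joined_iff_path_in path_in_def)
qed

lemma nbhd_memE:
  assumes "symp E" "x \<in> nbhd E H"
  obtains h where "h \<in> H" "E x h" "x \<notin> H"
  using assms unfolding nbhd_def nbrs_def symp_def by blast

lemma nbhd_subset: "graph V E \<Longrightarrow> nbhd E X \<subseteq> V"
  unfolding graph_def nbhd_def nbrs_def by blast

lemma finite_nbhd: "cubic V E \<Longrightarrow> finite S \<Longrightarrow> S \<subseteq> V \<Longrightarrow> finite (nbhd E S)"
  unfolding cubic_def nbhd_def by (intro finite_Diff finite_UN_I) auto

lemma nbhd_subset_if_disjoint:
  assumes "graph V E" "H \<inter> (S \<union> nbhd E S) = {}"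
  shows "nbhd E H \<subseteq> V - S"
  using assms unfolding graph_def nbhd_def nbrs_def by blast

text \<open>Vertices are recorded as singletons and edges as 2-sets, so that deleting the vertices
  \<open>Z\<close> and the edges \<open>D\<close> amounts to avoiding the obstacles \<open>{z}\<close> and \<open>D\<close>.\<close>
definition path_support :: "'a list \<Rightarrow> 'a set set" where
  "path_support p = (\<lambda>w. {w}) ` set p \<union> (\<lambda>i. {p ! i, p ! Suc i}) ` {i. Suc i < length p}"

lemma finite_path_support: "finite (path_support p)"
proof -
  have "{i. Suc i < length p} \<subseteq> {..<length p}" by auto
  from finite_subset[OF this finite_lessThan] show ?thesis unfolding path_support_def by simp
qed

lemma is_path_delete_edges_iff:
  assumes "\<And>w. {w} \<notin> D"
  shows "is_path (W - Z) (delete_edges E D) p u v \<longleftrightarrow>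
    is_path W E p u v \<and> path_support p \<inter> ((\<lambda>z. {z}) ` Z \<union> D) = {}"
proof -
  have edge_ne: "{p ! i, p ! Suc i} \<noteq> {z}" if "distinct p" "Suc i < length p" for i z
    using that nth_eq_iff_index_eq[of p i "Suc i"] by auto
  show ?thesis
  proof
    assume "is_path (W - Z) (delete_edges E D) p u v"
    then show "is_path W E p u v \<and> path_support p \<inter> ((\<lambda>z. {z}) ` Z \<union> D) = {}"
      using assms edge_ne unfolding is_path_def path_support_def delete_edges_def by blast
  next
    assume "is_path W E p u v \<and> path_support p \<inter> ((\<lambda>z. {z}) ` Z \<union> D) = {}"
    then show "is_path (W - Z) (delete_edges E D) p u v"
      unfolding is_path_def path_support_def delete_edges_def by blast
  qed
qed

definition captures :: "'a set \<Rightarrow> ('a \<Rightarrow> 'a \<Rightarrow> bool) \<Rightarrow> 'a set \<Rightarrow> nat \<Rightarrow> 'a set \<Rightarrow> bool" where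
  "captures W E N n T \<longleftrightarrow> (\<forall>u\<in>N. \<forall>v\<in>N. \<forall>Ob. finite Ob \<and> card Ob \<le> n \<longrightarrow>
     (\<exists>p. is_path W E p u v \<and> path_support p \<inter> Ob = {}) \<longrightarrow>
     (\<exists>p. is_path W E p u v \<and> set p \<subseteq> T \<and> path_support p \<inter> Ob = {}))"

lemma capturesD:
  assumes "captures W E N n T" "u \<in> N" "v \<in> N" "finite Ob" "card Ob \<le> n"
    "is_path W E p u v" "path_support p \<inter> Ob = {}"
  shows "\<exists>p'. is_path W E p' u v \<and> set p' \<subseteq> T \<and> path_support p' \<inter> Ob = {}"
  using assms unfolding captures_def by blast

lemma captures_mono: "captures W E N n T \<Longrightarrow> T \<subseteq> T' \<Longrightarrow> captures W E N n T'"
  unfolding captures_def by (meson order_trans)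

lemma captures_exists:
  assumes "finite N"
  shows "\<exists>T. finite T \<and> T \<subseteq> W \<and> captures W E N n T"
proof -
  have "\<exists>F. avoidance_core (\<lambda>p. is_path W E p u v) path_support n F" for u v
    by (rule avoidance_core_exists) (simp add: finite_path_support)
  then obtain F where F: "\<And>u v. avoidance_core (\<lambda>p. is_path W E p u v) path_support n (F u v)"
    by metis
  define T where "T = W \<inter> (\<Union>u\<in>N. \<Union>v\<in>N. (\<lambda>w. {w}) -` F u v)"
  have "finite ((\<lambda>w. {w}) -` F u v)" for u v
    using F[of u v] by (intro finite_vimageI) (auto simp: avoidance_core_def inj_on_def)
  then have "finite T" using assms by (simp add: T_def)
  moreover have "captures W E N n T"
    unfolding captures_def
  proof (intro ballI allI impI)
    fix u v Ob assume "u \<in> N" "v \<in> N" "finite Ob \<and> card Ob \<le> n"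
      "\<exists>p. is_path W E p u v \<and> path_support p \<inter> Ob = {}"
    then obtain p where p: "is_path W E p u v" "path_support p \<subseteq> F u v" "path_support p \<inter> Ob = {}"
      using F[of u v] unfolding avoidance_core_def by blast
    have "{w} \<in> F u v" if "w \<in> set p" for w using p(2) that by (auto simp: path_support_def)
    moreover have "set p \<subseteq> W" using p(1) by (simp add: is_path_def)
    ultimately have "set p \<subseteq> T" using \<open>u \<in> N\<close> \<open>v \<in> N\<close> by (auto simp: T_def)
    with p show "\<exists>p. is_path W E p u v \<and> set p \<subseteq> T \<and> path_support p \<inter> Ob = {}" by blast
  qed
  ultimately show ?thesis by (auto simp: T_def)
qed

lemma joined_delete_edge:
  assumes "joined W E a b" "x \<notin> W"
  shows "joined W (delete_edges E {{x, y}}) a b"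
proof -
  obtain p where p: "path_in W E p" "hd p = a" "last p = b"
    using assms(1) by (auto simp: joined_iff_path_in)
  moreover have "x \<notin> set p" using p(1) assms(2) by (auto simp: path_in_def)
  ultimately show ?thesis using path_in_delete_edge[of W E p x y] by (auto simp: joined_iff_path_in)
qed

lemma joined_through_connected:
  assumes Hc: "\<And>h h'. h \<in> H \<Longrightarrow> h' \<in> H \<Longrightarrow> joined H E h h'" and "H \<subseteq> U"
    and "x \<in> U" "y \<in> U" "x \<notin> H" "y \<notin> H" and h: "h \<in> H" "E x h" and h': "h' \<in> H" "E h' y"
  shows "joined U (delete_edges E {{x, y}}) x y"
proof -
  let ?E' = "delete_edges E {{x, y}}"
  have "joined H ?E' h h'" using joined_delete_edge[OF Hc[OF h(1) h'(1)] \<open>x \<notin> H\<close>] .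
  then have "joined U ?E' h h'" using \<open>H \<subseteq> U\<close> order_refl by (rule joined_mono)
  moreover have "joined U ?E' x h" "joined U ?E' h' y"
    using assms by (auto intro!: joined_edge simp: delete_edges_def doubleton_eq_iff)
  ultimately show ?thesis by (meson joined_trans)
qed

lemma path_in_exit:
  assumes "symp E'" "E' \<le> E"
    and "path_in U E' p" "hd p \<notin> S" "set p \<inter> S \<noteq> {}"
  obtains u where "u \<in> nbhd E S" "joined (U - S) E' (hd p) u"
proof -
  obtain q where q: "path_in U E' q" "hd q = hd p" "last q \<in> S" "set (butlast q) \<inter> S = {}"
    "set q \<subseteq> set p"
    using assms(3,5) by (rule path_in_first_hit)
  have "q \<noteq> []" using q(1) by (simp add: path_in_def)
  have ne: "butlast q \<noteq> []"
  proof
    assume "butlast q = []"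
    with \<open>q \<noteq> []\<close> have "hd q = last q" by (metis append_butlast_last_id append_Nil list.sel(1))
    with q(2,3) assms(4) show False by simp
  qed
  have "successively E' (butlast q @ [last q])"
    using q(1) by (simp add: path_in_def)
  then have "E' (last (butlast q)) (last q)" using ne by (simp add: successively_append_iff)
  then have "E (last q) (last (butlast q))" using assms(1,2) by (meson sympD predicate2D)
  moreover have "last (butlast q) \<notin> S" using q(4) last_in_set[OF ne] by blast
  ultimately have "last (butlast q) \<in> nbhd E S" using q(3) by (auto simp: nbhd_def nbrs_def)
  moreover have "joined (U - S) E' (hd (butlast q)) (last (butlast q))"
    using path_in_restrict[OF path_in_butlast[OF q(1) ne] q(4)] by (rule joined_path_in)
  ultimately show thesis using that hd_butlast[OF ne] q(2) by simp
qed

lemma joined_via_boundary: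
  assumes "symp E'" "E' \<le> E"
    and "joined U E' x y" "x \<notin> S" "y \<notin> S" "\<not> joined (U - S) E' x y"
  obtains u v where "u \<in> nbhd E S" "v \<in> nbhd E S" "joined (U - S) E' x u" "joined (U - S) E' v y"
proof -
  obtain p where p: "path_in U E' p" "hd p = x" "last p = y"
    using assms(3) by (auto simp: joined_iff_path_in)
  have meet: "set p \<inter> S \<noteq> {}"
    using assms(6) p joined_path_in[OF path_in_restrict[OF p(1)]] by auto
  obtain u where "u \<in> nbhd E S" "joined (U - S) E' (hd p) u"
    using path_in_exit[OF assms(1,2) p(1)] p(2) assms(4) meet by blast
  moreover obtain v where "v \<in> nbhd E S" "joined (U - S) E' (hd (rev p)) v"
    using path_in_exit[OF assms(1,2) path_in_rev[OF assms(1) p(1)]] p(3) assms(5) meet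
    by (auto simp: hd_rev)
  ultimately show thesis
    using that joined_sym[OF assms(1)] p(2,3) by (simp add: hd_rev)
qed

lemma three_connected_joined:
  assumes "three_connected V E" "finite Z" "card Z \<le> 2" "x \<in> V - Z" "y \<in> V - Z"
  shows "joined (V - Z) E x y"
proof -
  have "card (Z \<inter> V) \<le> 2" using assms(2,3) card_mono[of Z "Z \<inter> V"] by simp
  then have "connected_in (V - Z \<inter> V) E" using assms(1,2) by (simp add: three_connected_def)
  moreover have "V - Z \<inter> V = V - Z" by blast
  ultimately show ?thesis using assms(4,5) by (auto simp: connected_in_def joined_def)
qed

lemma cubic_joined_without_edge:
  assumes "graph V E" "cubic V E" "three_connected V E" "E x y"
    and Z: "finite Z" "card Z \<le> 1" "x \<notin> Z" "y \<notin> Z"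
  shows "joined (V - Z) (delete_edges E {{x, y}}) x y"
proof -
  let ?E' = "delete_edges E {{x, y}}"
  have xy: "x \<in> V" "y \<in> V" "x \<noteq> y" using assms(1,4) by (auto simp: graph_def)
  have "card (insert y Z) < card (nbrs E x)"
    using Z(1,2) assms(2) xy(1) card_insert_le_m1[of 2 Z y] by (simp add: cubic_def card_insert_if)
  then have "\<not> nbrs E x \<subseteq> insert y Z" using Z(1) card_mono[of "insert y Z" "nbrs E x"] by auto
  then obtain w where w: "E x w" "w \<noteq> y" "w \<notin> Z" by (auto simp: nbrs_def)
  then have "w \<in> V" "w \<noteq> x" using assms(1) by (auto simp: graph_def)
  have "card (insert x Z) \<le> 2" using Z(1,2) by (simp add: card_insert_if)
  then have "joined (V - insert x Z) E w y"
    using three_connected_joined[OF assms(3)] Z \<open>w \<in> V\<close> \<open>w \<noteq> x\<close> w xy by simp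
  then have "joined (V - insert x Z) ?E' w y" by (rule joined_delete_edge) simp
  then have "joined (V - Z) ?E' w y" by (rule joined_mono) auto
  moreover have "joined (V - Z) ?E' x w"
    using w \<open>w \<in> V\<close> \<open>w \<noteq> x\<close> xy Z by (auto intro!: joined_edge simp: delete_edges_def doubleton_eq_iff)
  ultimately show ?thesis by (meson joined_trans)
qed

lemma captures_reroute:
  assumes cap: "captures W E N 3 T" and "u \<in> N" "v \<in> N" "H \<inter> T = {}" "x \<noteq> y"
    and Z: "finite Z" "card Z \<le> 2"
    and "joined (W - (Z - H)) (delete_edges E {{x, y}}) u v"
  shows "joined (W - Z) (delete_edges E {{x, y}}) u v"
proof -
  let ?E' = "delete_edges E {{x, y}}" and ?Ob = "(\<lambda>z. {z}) ` (Z - H) \<union> {{x, y}}"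
  have no_single: "\<And>w. {w} \<notin> {{x, y}}" using \<open>x \<noteq> y\<close> by (auto simp: doubleton_eq_iff)
  obtain p where "is_path (W - (Z - H)) ?E' p u v" using assms(8) by (auto simp: joined_def)
  then have "is_path W E p u v" "path_support p \<inter> ?Ob = {}"
    unfolding is_path_delete_edges_iff[OF no_single] by simp_all
  moreover have "finite ?Ob" using Z(1) by simp
  moreover have "card ?Ob \<le> 3"
  proof -
    have "card ((\<lambda>z. {z}) ` (Z - H)) \<le> card Z"
      using card_image_le[OF finite_Diff[OF Z(1)]] card_mono[OF Z(1) Diff_subset] by (rule order_trans)
    then show ?thesis using card_Un_le[of "(\<lambda>z. {z}) ` (Z - H)" "{{x, y}}"] Z(2) by simp
  qed
  ultimately obtain p' where p': "is_path W E p' u v" "set p' \<subseteq> T" "path_support p' \<inter> ?Ob = {}"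
    using capturesD[OF cap \<open>u \<in> N\<close> \<open>v \<in> N\<close>] by blast
  then have "is_path (W - (Z - H)) ?E' p' u v" unfolding is_path_delete_edges_iff[OF no_single] by simp
  moreover have "set p' \<inter> H = {}" using p'(2) \<open>H \<inter> T = {}\<close> by blast
  ultimately have "is_path (W - Z) ?E' p' u v" by (auto simp: is_path_def)
  then show ?thesis by (auto simp: joined_def)
qed

lemma boundary_stays_joined_without_S:
  assumes "graph V E" and cap: "captures (V - S) E (nbhd E S) 3 T" and ST: "S \<union> nbhd E S \<subseteq> T"
    and H: "component_of (V - T) E H" and xy: "x \<in> nbhd E H" "y \<in> nbhd E H" "x \<noteq> y"
    and Z: "finite Z" "card Z \<le> 2" "x \<notin> Z" "y \<notin> Z"
    and conn: "joined (V - Z) (delete_edges E {{x, y}}) x y"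
  shows "joined (V - S - Z) (delete_edges E {{x, y}}) x y"
proof (rule ccontr)
  let ?E' = "delete_edges E {{x, y}}"
  assume nc: "\<not> joined (V - S - Z) ?E' x y"
  have symp: "symp E" "symp ?E'" using graph_symp[OF assms(1)] symp_delete_edges by blast+
  have "?E' \<le> E" by (rule delete_edges_le)
  have HT: "H \<subseteq> V - T" using H by (rule component_of_subset)
  have "x \<in> V - S" "y \<in> V - S"
    using nbhd_subset_if_disjoint[OF assms(1), of H S] HT ST xy by blast+
  have swap: "V - Z - S = V - S - Z" by blast
  obtain u v where uv: "u \<in> nbhd E S" "v \<in> nbhd E S"
    "joined (V - S - Z) ?E' x u" "joined (V - S - Z) ?E' v y"
    using joined_via_boundary[OF symp(2) \<open>?E' \<le> E\<close> conn, of S, unfolded swap]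
      nc \<open>x \<in> V - S\<close> \<open>y \<in> V - S\<close> by blast
  obtain h where h: "h \<in> H" "E x h" "x \<notin> H" by (rule nbhd_memE[OF symp(1) xy(1)])
  obtain h' where h': "h' \<in> H" "E y h'" "y \<notin> H" by (rule nbhd_memE[OF symp(1) xy(2)])
  have "joined (V - S - (Z - H)) ?E' x y"
  proof (rule joined_through_connected[OF component_of_joined[OF symp(1) H] _ _ _ h(3) h'(3) h(1,2) h'(1)])
    show "H \<subseteq> V - S - (Z - H)" using HT ST by blast
    show "x \<in> V - S - (Z - H)" "y \<in> V - S - (Z - H)" using \<open>x \<in> V - S\<close> \<open>y \<in> V - S\<close> Z by auto
    show "E h' y" using symp(1) h'(2) by (rule sympD)
  qed
  moreover have "joined (V - S - (Z - H)) ?E' u x"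
    using joined_sym[OF symp(2) uv(3)] by (rule joined_mono) auto
  moreover have "joined (V - S - (Z - H)) ?E' y v"
    using joined_sym[OF symp(2) uv(4)] by (rule joined_mono) auto
  ultimately have "joined (V - S - (Z - H)) ?E' u v" by (meson joined_trans)
  then have "joined (V - S - Z) ?E' u v"
    using captures_reroute[OF cap uv(1,2) _ xy(3) Z(1,2)] HT by blast
  then have "joined (V - S - Z) ?E' x y" using uv(3,4) by (meson joined_trans)
  with nc show False ..
qed

lemma component_boundary_three_connected:
  assumes "graph V E" "cubic V E" "three_connected V E"
    and cap: "captures (V - S) E (nbhd E S) 3 T" and ST: "S \<union> nbhd E S \<subseteq> T"
    and H: "component_of (V - T) E H"
  shows "set_three_connected_in (nbhd E H) (V - S) E"
proof (rule set_three_connected_inI)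
  fix x y assume xy: "x \<in> nbhd E H" "y \<in> nbhd E H" "x \<noteq> y"
  have "x \<in> V - S" "y \<in> V - S"
    using nbhd_subset_if_disjoint[OF assms(1), of H S] component_of_subset[OF H] ST xy by blast+
  then show "\<exists>PP. card PP = 3 \<and> (\<forall>p\<in>PP. is_path (V - S) E p x y) \<and> disjoint_family_on interior PP"
  proof (intro three_internally_disjoint_paths[OF graph_symp[OF assms(1)] _ _ xy(3)])
    fix Z assume Z: "finite Z" "card Z + of_bool (E x y) \<le> 2" "x \<notin> Z" "y \<notin> Z"
    have "joined (V - Z) (delete_edges E {{x, y}}) x y"
    proof (cases "E x y")
      case True
      with Z(2) have "card Z \<le> 1" by simp
      with True show ?thesis using cubic_joined_without_edge[OF assms(1-3) True Z(1) _ Z(3,4)] by blast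
    next
      case False
      with Z(2) have "card Z \<le> 2" by simp
      then have "joined (V - Z) E x y"
        using three_connected_joined[OF assms(3) Z(1)] Z(3,4) \<open>x \<in> V - S\<close> \<open>y \<in> V - S\<close> by blast
      then show ?thesis using delete_edges_non_edge[OF graph_symp[OF assms(1)] False] by simp
    qed
    moreover have "card Z \<le> 2" using Z(2) by simp
    ultimately show "joined (V - S - Z) (delete_edges E {{x, y}}) x y"
      using boundary_stays_joined_without_S[OF assms(1) cap ST H xy Z(1) _ Z(3,4)] by blast
  qed
qed

theorem lemma10:
  fixes V :: "'a set" and E :: "'a \<Rightarrow> 'a \<Rightarrow> bool" and S :: "'a set"
  assumes "graph V E" and "cubic V E" and "three_connected V E"
    and "finite S" and "S \<subseteq> V"
  shows "\<exists>T. finite T \<and> T \<subseteq> V \<and> S \<union> nbhd E S \<subseteq> T \<and>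
           (\<forall>H. component_of (V - T) E H \<longrightarrow> set_three_connected_in (nbhd E H) (V - S) E)"
proof -
  have N: "finite (nbhd E S)" "nbhd E S \<subseteq> V"
    using finite_nbhd[OF assms(2,4,5)] nbhd_subset[OF assms(1)] .
  obtain T0 where T0: "finite T0" "T0 \<subseteq> V - S" "captures (V - S) E (nbhd E S) 3 T0"
    using captures_exists[OF N(1), where W = "V - S" and E = E and n = 3] by blast
  define T where "T = S \<union> nbhd E S \<union> T0"
  have T: "finite T" "T \<subseteq> V" "S \<union> nbhd E S \<subseteq> T"
    using T0(1,2) N assms(4,5) by (auto simp: T_def)
  have "captures (V - S) E (nbhd E S) 3 T"
    using T0(3) by (rule captures_mono) (auto simp: T_def)
  with T show ?thesis
    using component_boundary_three_connected[OF assms(1-3) _ T(3)] by blast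
qed

end
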